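(* The set $\mathbb{I}$ of intervals of $\mathbb{F}$ is closed under intersections: if $I,J\in\mathbb{I}$ then $I\cap J\in\mathbb{I}$.
   Context: $\mathbb{F}$ is the free group on generators $a,b$ with identity $e$. For $n=4k+i$ with $k\in\mathbb{N}$ and $0\le i<4$, set $\ell_n=a,a^{-1},b,b^{-1}$ according as $i=0,1,2,3$. For $g\in\mathbb{F}$ and $S\subseteq\mathbb{F}$ let $gS=\{gs:s\in S\}$. Define $I_0=\{e\}$ and $I_{n+1}=I_n\cup\ell_nI_n$. An interval of $\mathbb{F}$ is either the empty set or a set of the form $wI_n$ with $w\in\mathbb{F}$, $n\in\mathbb{N}$; $\mathbb{I}$ denotes the set of intervals. *)

theory Defs
  imports Main
begin

text \<open>The free group F on generators a, b, modelled as reduced words.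
A letter is a pair (g, s): g = False means generator a, g = True means b;
s = True means the inverse of the generator.\<close>

type_synonym letter = "bool \<times> bool"

definition inv_letter :: "letter \<Rightarrow> letter" where
  "inv_letter x = (fst x, \<not> snd x)"

fun reduced :: "letter list \<Rightarrow> bool" where
  "reduced [] = True"
| "reduced [x] = True"
| "reduced (x # y # ys) = (y \<noteq> inv_letter x \<and> reduced (y # ys))"

fun cons_red :: "letter \<Rightarrow> letter list \<Rightarrow> letter list" where
  "cons_red x [] = [x]"
| "cons_red x (y # ys) = (if y = inv_letter x then ys else x # y # ys)"

definition normalize :: "letter list \<Rightarrow> letter list" where
  "normalize w = foldr cons_red w []"

definition FG :: "letter list set" where
  "FG = {w. reduced w}"

definition fg_e :: "letter list" where
  "fg_e = []"

definition fg_mult :: "letter list \<Rightarrow> letter list \<Rightarrow> letter list" where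
  "fg_mult g h = normalize (g @ h)"

definition gen_a :: "letter list" where "gen_a = [(False, False)]"
definition gen_a_inv :: "letter list" where "gen_a_inv = [(False, True)]"
definition gen_b :: "letter list" where "gen_b = [(True, False)]"
definition gen_b_inv :: "letter list" where "gen_b_inv = [(True, True)]"

definition ell :: "nat \<Rightarrow> letter list" where
  "ell n = (if n mod 4 = 0 then gen_a else if n mod 4 = 1 then gen_a_inv
            else if n mod 4 = 2 then gen_b else gen_b_inv)"

definition lmult :: "letter list \<Rightarrow> letter list set \<Rightarrow> letter list set" where
  "lmult g S = (\<lambda>s. fg_mult g s) ` S"

fun Iv :: "nat \<Rightarrow> letter list set" where
  "Iv 0 = {fg_e}"
| "Iv (Suc n) = Iv n \<union> lmult (ell n) (Iv n)"

definition intervals :: "letter list set set" where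
  "intervals = {{}} \<union> {lmult w (Iv n) | w n. w \<in> FG}"

end

theory Submission
  imports Defs "HOL-Library.Option_ord"
begin

(* A reduced word lies in I_n iff it embeds as a subword of the descending word
   l_(n-1) l_(n-2) ... l_0; embedding greedily, the position reached is monotone in n.
   After a translation it suffices to intersect I_n with g I_m for reduced g.  Writing a
   reduced z as z = c y with c the longest common prefix of z and g, membership of z in
   I_n \<inter> g I_m only asks y to embed from a bound M(|c|) that does not depend on y.  If M
   attains its maximum k at the prefix of g of length p, restarting the greedy embedding
   from k at that prefix reproduces M at every other prefix, so the intersection is
   (g_1 ... g_p) I_k. *)

lemma inv_letter_inv_letter [simp]: "inv_letter (inv_letter x) = x"
  by (simp add: inv_letter_def)

lemma inv_letter_neq [simp]: "inv_letter x \<noteq> x" "x \<noteq> inv_letter x"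
  by (simp_all add: inv_letter_def prod_eq_iff)

lemma inv_letter_eq_iff [simp]: "inv_letter x = inv_letter y \<longleftrightarrow> x = y"
  by (metis inv_letter_inv_letter)

lemma reduced_ConsD: "reduced (x # xs) \<Longrightarrow> reduced xs"
  by (cases xs) auto

lemma reduced_append:
  "reduced (xs @ ys) \<longleftrightarrow>
     reduced xs \<and> reduced ys \<and> (xs \<noteq> [] \<longrightarrow> ys \<noteq> [] \<longrightarrow> hd ys \<noteq> inv_letter (last xs))"
proof (induction xs rule: reduced.induct)
  case (2 x)
  then show ?case by (cases ys) auto
qed simp_all

lemma reduced_take: "reduced g \<Longrightarrow> reduced (take i g)"
  using reduced_append[of "take i g" "drop i g"] by simp

lemma reduced_drop: "reduced g \<Longrightarrow> reduced (drop i g)"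
  using reduced_append[of "take i g" "drop i g"] by simp

lemma reduced_cons_red: "reduced r \<Longrightarrow> reduced (cons_red x r)"
  by (cases r) (auto dest: reduced_ConsD)

lemma cons_red_inv_letter_cancel:
  "reduced r \<Longrightarrow> cons_red (inv_letter x) (cons_red x r) = r"
  by (cases r rule: reduced.cases) auto

definition ginv :: "letter list \<Rightarrow> letter list" where
  "ginv w = rev (map inv_letter w)"

lemma ginv_Nil [simp]: "ginv [] = []"
  and ginv_Cons [simp]: "ginv (x # xs) = ginv xs @ [inv_letter x]"
  and ginv_append [simp]: "ginv (xs @ ys) = ginv ys @ ginv xs"
  and ginv_ginv [simp]: "ginv (ginv xs) = xs"
  and ginv_eq_Nil_iff [simp]: "ginv xs = [] \<longleftrightarrow> xs = []"
  by (simp_all add: ginv_def rev_map comp_def)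

lemma last_ginv: "xs \<noteq> [] \<Longrightarrow> last (ginv xs) = inv_letter (hd xs)"
  by (cases xs) (auto simp: ginv_def)

lemma reduced_ginv: "reduced xs \<Longrightarrow> reduced (ginv xs)"
proof (induction xs)
  case (Cons x xs)
  have "xs \<noteq> [] \<Longrightarrow> hd xs \<noteq> inv_letter x"
    using Cons.prems by (cases xs) auto
  with Cons show ?case
    by (auto simp: reduced_append last_ginv dest: reduced_ConsD)
qed simp

lemma reduced_foldr_cons_red: "reduced r \<Longrightarrow> reduced (foldr cons_red w r)"
  by (induction w) (auto intro: reduced_cons_red)

lemma foldr_cons_red_ginv_cancel:
  "reduced r \<Longrightarrow> foldr cons_red (ginv w) (foldr cons_red w r) = r"
  by (induction w) (simp_all add: cons_red_inv_letter_cancel reduced_foldr_cons_red)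

lemma normalize_Cons: "normalize (x # w) = cons_red x (normalize w)"
  by (simp add: normalize_def)

lemma reduced_normalize [simp]: "reduced (normalize w)"
  unfolding normalize_def by (rule reduced_foldr_cons_red) simp

lemma normalize_id: "reduced w \<Longrightarrow> normalize w = w"
proof (induction w)
  case (Cons x w)
  then show ?case
    by (cases w) (auto simp: normalize_Cons dest: reduced_ConsD)
qed (simp add: normalize_def)

lemma foldr_cons_red_cons_red:
  assumes "reduced w" "reduced r"
  shows "foldr cons_red (cons_red x w) r = cons_red x (foldr cons_red w r)"
proof (cases w)
  case (Cons y ys)
  with assms have "reduced (foldr cons_red ys r)"
    by (auto intro: reduced_foldr_cons_red)
  with Cons show ?thesis
    using cons_red_inv_letter_cancel[of _ "inv_letter x"] by auto
qed simp

lemma foldr_cons_red_normalize: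
  "reduced r \<Longrightarrow> foldr cons_red (normalize w) r = foldr cons_red w r"
  by (induction w) (simp_all add: normalize_Cons foldr_cons_red_cons_red, simp add: normalize_def)

lemma fg_mult_eq_foldr: "fg_mult w r = foldr cons_red w (normalize r)"
  by (simp add: fg_mult_def normalize_def)

lemma reduced_fg_mult [simp]: "reduced (fg_mult w r)"
  by (simp add: fg_mult_def)

lemma fg_mult_reduced_append: "reduced (w @ r) \<Longrightarrow> fg_mult w r = w @ r"
  by (simp add: fg_mult_def normalize_id)

lemma fg_mult_append: "fg_mult (v @ w) r = fg_mult v (fg_mult w r)"
  by (simp add: fg_mult_eq_foldr normalize_id reduced_foldr_cons_red)

lemma fg_mult_assoc: "fg_mult (fg_mult u v) r = fg_mult u (fg_mult v r)"
proof -
  have "fg_mult (fg_mult u v) r = foldr cons_red (normalize (u @ v)) (normalize r)"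
    by (simp add: fg_mult_def normalize_def)
  also have "\<dots> = fg_mult (u @ v) r"
    by (simp add: foldr_cons_red_normalize fg_mult_eq_foldr del: foldr_append)
  finally show ?thesis
    by (simp add: fg_mult_append)
qed

lemma fg_mult_ginv_cancel: "reduced r \<Longrightarrow> fg_mult (ginv w) (fg_mult w r) = r"
  by (simp add: fg_mult_eq_foldr normalize_id reduced_foldr_cons_red
      foldr_cons_red_ginv_cancel)

lemma fg_mult_ginv_cancel': "reduced r \<Longrightarrow> fg_mult w (fg_mult (ginv w) r) = r"
  using fg_mult_ginv_cancel[of r "ginv w"] by simp

lemma fg_mult_ginv_prefix: "reduced (c @ r) \<Longrightarrow> fg_mult (ginv c) (c @ r) = r"
  by (metis fg_mult_ginv_cancel fg_mult_reduced_append reduced_append)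

lemma lmult_subset_reduced: "lmult w S \<subseteq> {x. reduced x}"
  by (auto simp: lmult_def)

lemma Iv_subset_reduced: "Iv n \<subseteq> {x. reduced x}"
  by (induction n) (auto simp: fg_e_def lmult_def)

lemma mem_lmult_iff:
  assumes "S \<subseteq> {x. reduced x}"
  shows "x \<in> lmult w S \<longleftrightarrow> reduced x \<and> fg_mult (ginv w) x \<in> S"
proof
  assume "x \<in> lmult w S"
  then obtain s where "s \<in> S" "x = fg_mult w s"
    by (auto simp: lmult_def)
  with assms show "reduced x \<and> fg_mult (ginv w) x \<in> S"
    by (auto simp: fg_mult_ginv_cancel)
next
  assume "reduced x \<and> fg_mult (ginv w) x \<in> S"
  then show "x \<in> lmult w S"
    unfolding lmult_def by (metis fg_mult_ginv_cancel' image_eqI)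
qed

lemma lmult_Int:
  assumes "S \<subseteq> {x. reduced x}" "S' \<subseteq> {x. reduced x}"
  shows "lmult w (S \<inter> S') = lmult w S \<inter> lmult w S'"
proof -
  have "S \<inter> S' \<subseteq> {x. reduced x}"
    using assms by blast
  with assms show ?thesis
    by (auto simp: mem_lmult_iff)
qed

lemma lmult_lmult: "lmult u (lmult v S) = lmult (fg_mult u v) S"
  by (simp add: lmult_def image_image fg_mult_assoc)

lemma lmult_interval:
  assumes "I \<in> intervals"
  shows "lmult w I \<in> intervals"
proof (cases "I = {}")
  case False
  with assms obtain v n where "I = lmult v (Iv n)"
    by (auto simp: intervals_def)
  then have "lmult w I = lmult (fg_mult w v) (Iv n)"
    by (simp add: lmult_lmult)
  then show ?thesis
    by (auto simp: intervals_def FG_def)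
qed (simp add: intervals_def lmult_def)

definition ell_letter :: "nat \<Rightarrow> letter" where
  "ell_letter n = (2 \<le> n mod 4, n mod 4 = 1 \<or> n mod 4 = 3)"

lemma ell_eq_ell_letter: "ell n = [ell_letter n]"
proof -
  have "n mod 4 = 0 \<or> n mod 4 = 1 \<or> n mod 4 = 2 \<or> n mod 4 = 3"
    by linarith
  then show ?thesis
    by (auto simp: ell_def ell_letter_def gen_a_def gen_a_inv_def gen_b_def gen_b_inv_def)
qed

fun prev_occ :: "letter \<Rightarrow> nat \<Rightarrow> nat option" where
  "prev_occ s 0 = None"
| "prev_occ s (Suc j) = (if ell_letter j = s then Some j else prev_occ s j)"

text \<open>\<open>embed_pos k w\<close> embeds \<open>w\<close> greedily as a subword of
  \<open>\<ell>\<^sub>k\<^sub>-\<^sub>1 \<ell>\<^sub>k\<^sub>-\<^sub>2 \<dots> \<ell>\<^sub>0\<close> and returns the position reached;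
  \<open>I\<^sub>k\<close> consists of the reduced words for which this succeeds.\<close>
fun embed_pos :: "nat \<Rightarrow> letter list \<Rightarrow> nat option" where
  "embed_pos k [] = Some k"
| "embed_pos k (x # xs) = Option.bind (prev_occ x k) (\<lambda>j. embed_pos j xs)"

lemma prev_occ_SomeD:
  "prev_occ s k = Some j \<Longrightarrow> j < k \<and> ell_letter j = s \<and> (\<forall>u. j < u \<and> u < k \<longrightarrow> ell_letter u \<noteq> s)"
  by (induction k) (auto split: if_splits simp: less_Suc_eq)

lemma prev_occ_mono: "k \<le> k' \<Longrightarrow> prev_occ s k \<le> prev_occ s k'"
proof (induction k' rule: dec_induct)
  case (step k')
  then show ?case
    by (cases "prev_occ s k") (auto dest: prev_occ_SomeD)
qed simp

lemma prev_occ_eq: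
  assumes "k \<le> k'" "\<forall>j. prev_occ s k' = Some j \<longrightarrow> j < k"
  shows "prev_occ s k = prev_occ s k'"
  using assms
proof (induction k' rule: dec_induct)
  case (step k')
  then show ?case
    by (auto simp del: prev_occ.simps simp: prev_occ.simps(2)[of s k'])
qed simp

lemma embed_pos_append: "embed_pos k (xs @ ys) = Option.bind (embed_pos k xs) (\<lambda>j. embed_pos j ys)"
  by (induction xs arbitrary: k) (auto split: Option.bind_split)

lemma embed_pos_snoc: "embed_pos k (xs @ [x]) = Option.bind (embed_pos k xs) (prev_occ x)"
  by (simp add: embed_pos_append split: Option.bind_split)

lemma embed_pos_mono: "k \<le> k' \<Longrightarrow> embed_pos k xs \<le> embed_pos k' xs"
proof (induction xs arbitrary: k k')
  case (Cons x xs)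
  have "prev_occ x k \<le> prev_occ x k'"
    using Cons.prems by (rule prev_occ_mono)
  then show ?case
    using Cons.IH
    by (cases "prev_occ x k"; cases "prev_occ x k'") auto
qed simp

lemma embed_pos_ne_None_mono:
  "k \<le> k' \<Longrightarrow> embed_pos k xs \<noteq> None \<Longrightarrow> embed_pos k' xs \<noteq> None"
  by (metis embed_pos_mono less_eq_option_None_is_None)

lemma embed_pos_min_ne_None:
  "embed_pos (min a b) y \<noteq> None \<longleftrightarrow> embed_pos a y \<noteq> None \<and> embed_pos b y \<noteq> None"
  by (metis embed_pos_ne_None_mono min.cobounded1 min_def)

lemma embed_pos_Suc_cons_red:
  assumes "reduced h" "embed_pos n h \<noteq> None"
  shows "embed_pos (Suc n) (cons_red (ell_letter n) h) \<noteq> None"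
proof (cases h)
  case (Cons y ys)
  show ?thesis
  proof (cases "y = inv_letter (ell_letter n)")
    case True
    with assms Cons obtain j where "j < n" "embed_pos j ys \<noteq> None"
      by (auto dest: prev_occ_SomeD split: Option.bind_splits)
    then have "embed_pos (Suc n) ys \<noteq> None"
      using embed_pos_ne_None_mono[of j "Suc n"] by simp
    with True Cons show ?thesis
      by simp
  qed (use assms Cons in simp)
qed simp

lemma embed_pos_Suc_cases:
  assumes "reduced g" "embed_pos (Suc n) g \<noteq> None"
  shows "embed_pos n g \<noteq> None \<or> (\<exists>h. reduced h \<and> embed_pos n h \<noteq> None \<and> g = cons_red (ell_letter n) h)"
proof (cases g)
  case (Cons x xs)
  show ?thesis
  proof (cases "x = ell_letter n")
    case True
    with assms Cons have "reduced xs" "embed_pos n xs \<noteq> None" "g = cons_red (ell_letter n) xs"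
      by (auto dest: reduced_ConsD) (cases xs; auto)
    then show ?thesis
      by blast
  qed (use assms Cons in simp)
qed simp

lemma Iv_eq_embed_pos: "Iv n = {g. reduced g \<and> embed_pos n g \<noteq> None}"
proof (induction n)
  case 0
  show ?case
    by (auto simp: fg_e_def elim: embed_pos.elims)
next
  case (Suc n)
  have "lmult (ell n) (Iv n) = cons_red (ell_letter n) ` Iv n"
    unfolding lmult_def using Suc
    by (intro image_cong) (simp_all add: fg_mult_def ell_eq_ell_letter normalize_Cons normalize_id)
  then have Iv_Suc: "Iv (Suc n) = Iv n \<union> cons_red (ell_letter n) ` Iv n"
    by simp
  show ?case
  proof (intro set_eqI iffI)
    fix g
    assume "g \<in> Iv (Suc n)"
    then consider "g \<in> Iv n" | h where "h \<in> Iv n" "g = cons_red (ell_letter n) h"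
      unfolding Iv_Suc by blast
    then show "g \<in> {g. reduced g \<and> embed_pos (Suc n) g \<noteq> None}"
    proof cases
      case 1
      then show ?thesis
        using embed_pos_ne_None_mono[of n "Suc n" g] Suc by simp
    next
      case 2
      then show ?thesis
        using Suc reduced_cons_red embed_pos_Suc_cons_red by blast
    qed
  next
    fix g
    assume "g \<in> {g. reduced g \<and> embed_pos (Suc n) g \<noteq> None}"
    then show "g \<in> Iv (Suc n)"
      unfolding Iv_Suc Suc using embed_pos_Suc_cases by blast
  qed
qed

fun lcp :: "'a list \<Rightarrow> 'a list \<Rightarrow> nat" where
  "lcp (x # xs) (y # ys) = (if x = y then Suc (lcp xs ys) else 0)"
| "lcp _ _ = 0"

lemma lcp_le_length: "lcp xs ys \<le> length xs" "lcp xs ys \<le> length ys"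
  by (induction xs ys rule: lcp.induct) auto

lemma take_lcp: "take (lcp xs ys) xs = take (lcp xs ys) ys"
  by (induction xs ys rule: lcp.induct) auto

lemma nth_lcp_neq:
  "lcp xs ys < length xs \<Longrightarrow> lcp xs ys < length ys \<Longrightarrow> xs ! lcp xs ys \<noteq> ys ! lcp xs ys"
  by (induction xs ys rule: lcp.induct) auto

lemma append_take_lcp_drop: "take (lcp z g) g @ drop (lcp z g) z = z"
  by (metis append_take_drop_id take_lcp)

text \<open>Depending on whether \<open>j \<le> i\<close>, one of the first two factors on the right is empty.\<close>
lemma fg_mult_ginv_take:
  assumes "reduced z" "reduced g" "j \<le> length g"
  defines "i \<equiv> lcp z g"
  shows "fg_mult (ginv (take j g)) z = ginv (drop i (take j g)) @ drop j (take i g) @ drop i z"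
proof (cases "j \<le> i")
  case True
  then have "take i g = take j g @ drop j (take i g)"
    by (metis append_take_drop_id min.absorb1 take_take)
  then have "z = take j g @ drop j (take i g) @ drop i z"
    by (metis append.assoc append_take_lcp_drop i_def)
  with assms(1) have "fg_mult (ginv (take j g)) z = drop j (take i g) @ drop i z"
    by (metis fg_mult_ginv_prefix)
  with True show ?thesis
    by simp
next
  case False
  define u where "u = drop i (take j g)"
  have "take j g = take i g @ u"
    using False by (metis append_take_drop_id min.absorb1 nat_le_linear take_take u_def)
  then have "fg_mult (ginv (take j g)) z = fg_mult (ginv u) (fg_mult (ginv (take i g)) z)"
    by (simp add: fg_mult_append)
  also have "fg_mult (ginv (take i g)) z = drop i z"
    using append_take_lcp_drop[of z g] assms(1) fg_mult_ginv_prefix i_def by metis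
  also have "fg_mult (ginv u) (drop i z) = ginv u @ drop i z"
  proof (rule fg_mult_reduced_append)
    have "i < length g"
      using False assms(3) by simp
    then have "u \<noteq> []" "hd u = g ! i"
      using False by (simp_all add: u_def hd_drop_conv_nth)
    moreover have "hd (drop i z) \<noteq> g ! i" if "drop i z \<noteq> []"
      using that nth_lcp_neq[of z g] \<open>i < length g\<close> by (simp add: i_def hd_drop_conv_nth)
    ultimately show "reduced (ginv u @ drop i z)"
      using assms(1,2) by (simp add: reduced_append reduced_ginv reduced_drop reduced_take u_def
          last_ginv)
  qed
  finally show ?thesis
    using False by (simp add: u_def)
qed

lemma min_Some_Some [simp]: "min (Some a) (Some b) = Some (min a b)"
  by (simp add: min_def)

definition tail_bound :: "letter list \<Rightarrow> nat \<Rightarrow> nat \<Rightarrow> nat \<Rightarrow> nat option" where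
  "tail_bound g n m i = min (embed_pos n (take i g)) (embed_pos m (ginv (drop i g)))"

lemma mem_Iv_Int_lmult_iff:
  assumes "reduced g" "reduced z"
  defines "i \<equiv> lcp z g"
  shows "z \<in> Iv n \<inter> lmult g (Iv m) \<longleftrightarrow>
    (\<exists>p. tail_bound g n m i = Some p \<and> embed_pos p (drop i z) \<noteq> None)"
proof -
  have "i \<le> length g"
    using lcp_le_length by (simp add: i_def)
  then have eq: "fg_mult (ginv g) z = ginv (drop i g) @ drop i z"
    using fg_mult_ginv_take[OF assms(2,1), of "length g"] by (simp add: i_def)
  moreover have "reduced (ginv (drop i g) @ drop i z)"
    by (metis eq reduced_fg_mult)
  ultimately have in_lmult:
    "z \<in> lmult g (Iv m) \<longleftrightarrow>
       Option.bind (embed_pos m (ginv (drop i g))) (\<lambda>b. embed_pos b (drop i z)) \<noteq> None"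
    using assms(2) unfolding mem_lmult_iff[OF Iv_subset_reduced]
    by (simp add: Iv_eq_embed_pos embed_pos_append)
  have "embed_pos n z = embed_pos n (take i g @ drop i z)"
    by (simp add: i_def append_take_lcp_drop)
  then have in_Iv:
    "z \<in> Iv n \<longleftrightarrow> Option.bind (embed_pos n (take i g)) (\<lambda>a. embed_pos a (drop i z)) \<noteq> None"
    using assms(2) by (simp add: Iv_eq_embed_pos embed_pos_append)
  show ?thesis
    unfolding Int_iff in_lmult in_Iv
    by (cases "embed_pos n (take i g)"; cases "embed_pos m (ginv (drop i g))")
      (simp_all add: tail_bound_def embed_pos_min_ne_None del: not_None_eq)
qed

lemma bind_prev_occ_less: "x \<le> Some k \<Longrightarrow> Option.bind x (prev_occ s) < Some k"
  by (cases x; cases "prev_occ s (the x)") (auto dest: prev_occ_SomeD)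

lemma prev_occ_min_eq:
  assumes "prev_occ (inv_letter s) b1 = Some b0"
    and "min (prev_occ s a0) (Some b1) \<le> Some (min a0 b0)"
  shows "prev_occ s a0 < Some (min a0 b0) \<and> prev_occ s (min a0 b0) = prev_occ s a0"
proof (cases "prev_occ s a0")
  case (Some a1)
  have "b0 < b1" "ell_letter b0 = inv_letter s"
    using prev_occ_SomeD[OF assms(1)] by auto
  moreover have "a1 < a0" "ell_letter a1 = s"
    using prev_occ_SomeD[OF Some] by auto
  moreover have "min a1 b1 \<le> min a0 b0"
    using assms(2) Some by simp
  moreover have "a1 \<noteq> b0"
    using calculation by force
  ultimately have "a1 < min a0 b0"
    by (auto simp: min_def split: if_splits)
  with Some show ?thesis
    using prev_occ_eq[of "min a0 b0" a0 s] by auto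
qed (use prev_occ_eq[of "min a0 b0" a0 s] in auto)

text \<open>Greedy embedding started at the maximal value \<open>k\<close> of \<open>min (a i) (b i)\<close>
  stays equal to \<open>min (a i) (b i)\<close>: beyond \<open>p\<close> the \<open>a\<close>-chain drops below \<open>k\<close>
  while the \<open>b\<close>-chain stays above it.\<close>
lemma restart_at_max_eq_min:
  fixes a b r :: "nat \<Rightarrow> nat option" and s :: "nat \<Rightarrow> letter"
  assumes a_step: "\<And>i. p \<le> i \<Longrightarrow> i < N \<Longrightarrow> a (Suc i) = Option.bind (a i) (prev_occ (s i))"
    and b_step: "\<And>i. p \<le> i \<Longrightarrow> i < N \<Longrightarrow>
      b i = Option.bind (b (Suc i)) (prev_occ (inv_letter (s i)))"
    and r_step: "\<And>i. p \<le> i \<Longrightarrow> i < N \<Longrightarrow> r (Suc i) = Option.bind (r i) (prev_occ (s i))"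
    and max: "\<And>i. p \<le> i \<Longrightarrow> i \<le> N \<Longrightarrow> min (a i) (b i) \<le> Some k"
    and at_max: "min (a p) (b p) = Some k"
    and r_start: "r p = Some k"
    and "p \<le> i" "i \<le> N"
  shows "r i = min (a i) (b i)"
proof -
  have "r i = min (a i) (b i) \<and> Some k \<le> b i \<and> (p < i \<longrightarrow> r i = a i \<and> a i < Some k)"
    using \<open>p \<le> i\<close> \<open>i \<le> N\<close>
  proof (induction i rule: dec_induct)
    case base
    then show ?case
      using at_max r_start by (metis min.cobounded2 order.irrefl)
  next
    case (step j)
    then have IH: "r j = min (a j) (b j)" "Some k \<le> b j"
      and IH_right: "p < j \<Longrightarrow> r j = a j \<and> a j < Some k"
      by auto
    have "Some k < b (Suc j)"
      using IH(2) b_step[OF step.hyps(1)] step.prems bind_prev_occ_less[of "b (Suc j)" k]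
      by (metis leD le_less_linear less_Suc_eq_le)
    moreover have "r (Suc j) = a (Suc j) \<and> a (Suc j) < Some k"
    proof (cases "j = p")
      case True
      obtain a0 b0 where ab0: "a p = Some a0" "b p = Some b0" "k = min a0 b0"
        using at_max by (cases "a p"; cases "b p") auto
      with True b_step[of j] step.prems obtain b1 where
        b1: "b (Suc j) = Some b1" "prev_occ (inv_letter (s j)) b1 = Some b0"
        by (cases "b (Suc j)") auto
      have "min (prev_occ (s j) a0) (Some b1) \<le> Some (min a0 b0)"
        using max[of "Suc j"] a_step[of j] step ab0 b1 True by simp
      then show ?thesis
        using prev_occ_min_eq[OF b1(2)] a_step[of j] r_step[of j] step ab0 True r_start
        by simp
    next
      case False
      then show ?thesis
        using IH_right step a_step[of j] r_step[of j] bind_prev_occ_less[of "a j" k "s j"]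
        by (auto dest: less_imp_le)
    qed
    ultimately show ?case
      by (metis less_imp_le min.absorb1 order.strict_trans)
  qed
  then show ?thesis
    by blast
qed

lemma embed_pos_take_Suc:
  "i < length g \<Longrightarrow>
   embed_pos n (take (Suc i) g) = Option.bind (embed_pos n (take i g)) (prev_occ (g ! i))"
  by (simp add: take_Suc_conv_app_nth embed_pos_snoc)

lemma embed_pos_ginv_drop:
  "i < length g \<Longrightarrow>
   embed_pos m (ginv (drop i g)) =
     Option.bind (embed_pos m (ginv (drop (Suc i) g))) (prev_occ (inv_letter (g ! i)))"
  by (simp add: Cons_nth_drop_Suc[symmetric] embed_pos_snoc)

text \<open>Left of \<open>p\<close> this is the right-hand case for the inverse word read backwards from \<open>p\<close>,
  with the roles of the two embeddings exchanged.\<close>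
lemma embed_pos_restart_at_max:
  assumes max: "\<And>i. i \<le> length g \<Longrightarrow> tail_bound g n m i \<le> Some k"
    and at_max: "tail_bound g n m p = Some k"
    and "p \<le> length g" "i \<le> length g"
  shows "embed_pos k (ginv (drop i (take p g)) @ drop p (take i g)) = tail_bound g n m i"
proof (cases "p \<le> i")
  case True
  have "embed_pos k (drop p (take i g)) = tail_bound g n m i"
    unfolding tail_bound_def
  proof (rule restart_at_max_eq_min[where r = "\<lambda>i. embed_pos k (drop p (take i g))"
        and a = "\<lambda>i. embed_pos n (take i g)" and b = "\<lambda>i. embed_pos m (ginv (drop i g))"
        and p = p and N = "length g" and k = k and s = "\<lambda>i. g ! i" and i = i])
    fix j assume "p \<le> j" "j < length g"
    then show "embed_pos k (drop p (take (Suc j) g)) =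
        Option.bind (embed_pos k (drop p (take j g))) (prev_occ (g ! j))"
      by (simp add: take_Suc_conv_app_nth embed_pos_snoc)
  qed (use assms True in \<open>simp_all add: tail_bound_def embed_pos_take_Suc embed_pos_ginv_drop\<close>)
  with True show ?thesis
    by simp
next
  case False
  have "embed_pos k (ginv (drop (p - (p - i)) (take p g))) =
      min (embed_pos m (ginv (drop (p - (p - i)) g))) (embed_pos n (take (p - (p - i)) g))"
  proof (rule restart_at_max_eq_min[where r = "\<lambda>j. embed_pos k (ginv (drop (p - j) (take p g)))"
        and a = "\<lambda>j. embed_pos m (ginv (drop (p - j) g))" and b = "\<lambda>j. embed_pos n (take (p - j) g)"
        and p = 0 and N = p and k = k and s = "\<lambda>j. inv_letter (g ! (p - Suc j))"
        and i = "p - i"])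
    fix j assume j: "j < p"
    then have "drop (p - Suc j) (take p g) = g ! (p - Suc j) # drop (p - j) (take p g)"
      using assms(3) Cons_nth_drop_Suc[of "p - Suc j" "take p g"] by (simp add: Suc_diff_Suc)
    then show "embed_pos k (ginv (drop (p - Suc j) (take p g))) =
        Option.bind (embed_pos k (ginv (drop (p - j) (take p g))))
          (prev_occ (inv_letter (g ! (p - Suc j))))"
      by (simp add: embed_pos_snoc)
    show "embed_pos m (ginv (drop (p - Suc j) g)) =
        Option.bind (embed_pos m (ginv (drop (p - j) g))) (prev_occ (inv_letter (g ! (p - Suc j))))"
      using j assms(3) embed_pos_ginv_drop[of "p - Suc j" g m] by (simp add: Suc_diff_Suc)
    show "embed_pos n (take (p - j) g) =
        Option.bind (embed_pos n (take (p - Suc j) g))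
          (prev_occ (inv_letter (inv_letter (g ! (p - Suc j)))))"
      using j assms(3) embed_pos_take_Suc[of "p - Suc j" g n] by (simp add: Suc_diff_Suc)
  qed (use assms False in \<open>simp_all add: tail_bound_def min.commute\<close>)
  with False show ?thesis
    by (simp add: tail_bound_def min.commute)
qed

lemma Iv_Int_lmult_eq_lmult_take:
  assumes g: "reduced g"
    and max: "\<And>i. i \<le> length g \<Longrightarrow> tail_bound g n m i \<le> Some k"
    and at_max: "tail_bound g n m p = Some k" and "p \<le> length g"
  shows "Iv n \<inter> lmult g (Iv m) = lmult (take p g) (Iv k)"
proof (rule set_eqI)
  fix z
  show "z \<in> Iv n \<inter> lmult g (Iv m) \<longleftrightarrow> z \<in> lmult (take p g) (Iv k)"
  proof (cases "reduced z")
    case True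
    define i where "i = lcp z g"
    have "i \<le> length g"
      using lcp_le_length(2) by (simp add: i_def)
    then have "embed_pos k (ginv (drop i (take p g)) @ drop p (take i g)) = tail_bound g n m i"
      using embed_pos_restart_at_max[OF max at_max \<open>p \<le> length g\<close>] by simp
    moreover have "fg_mult (ginv (take p g)) z =
        (ginv (drop i (take p g)) @ drop p (take i g)) @ drop i z"
      using fg_mult_ginv_take[OF True g \<open>p \<le> length g\<close>] by (simp add: i_def)
    ultimately have "embed_pos k (fg_mult (ginv (take p g)) z) =
        Option.bind (tail_bound g n m i) (\<lambda>q. embed_pos q (drop i z))"
      by (simp only: embed_pos_append)
    then have "z \<in> lmult (take p g) (Iv k) \<longleftrightarrow>
        Option.bind (tail_bound g n m i) (\<lambda>q. embed_pos q (drop i z)) \<noteq> None"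
      using True unfolding mem_lmult_iff[OF Iv_subset_reduced] by (simp add: Iv_eq_embed_pos)
    then show ?thesis
      using mem_Iv_Int_lmult_iff[OF g True] by (cases "tail_bound g n m i") (simp_all add: i_def)
  qed (use Iv_subset_reduced lmult_subset_reduced in blast)
qed

lemma Iv_Int_lmult_interval:
  assumes "reduced g"
  shows "Iv n \<inter> lmult g (Iv m) \<in> intervals"
proof (cases "Iv n \<inter> lmult g (Iv m) = {}")
  case False
  let ?M = "tail_bound g n m"
  have "Max (?M ` {..length g}) \<in> ?M ` {..length g}"
    by (rule Max_in) auto
  then obtain p where p: "p \<le> length g" "?M p = Max (?M ` {..length g})"
    by (metis atMost_iff imageE)
  then have M_le: "?M i \<le> ?M p" if "i \<le> length g" for i
    using that by simp
  from False obtain z where "z \<in> Iv n \<inter> lmult g (Iv m)" "reduced z"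
    using Iv_subset_reduced by blast
  then obtain q where "?M (lcp z g) = Some q"
    using mem_Iv_Int_lmult_iff[OF assms] by blast
  with M_le[of "lcp z g"] obtain k where k: "?M p = Some k"
    using lcp_le_length(2) by (cases "?M p") auto
  then have "Iv n \<inter> lmult g (Iv m) = lmult (take p g) (Iv k)"
    using Iv_Int_lmult_eq_lmult_take[OF assms _ k p(1)] M_le by simp
  then show ?thesis
    using reduced_take[OF assms] by (auto simp: intervals_def FG_def)
qed (simp add: intervals_def)

theorem proposition2p6:
  assumes "I \<in> intervals" and "J \<in> intervals"
  shows "I \<inter> J \<in> intervals"
proof (cases "I = {} \<or> J = {}")
  case False
  with assms obtain w n v m where I: "I = lmult w (Iv n)" and J: "J = lmult v (Iv m)"
    and "reduced v"
    by (auto simp: intervals_def FG_def)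
  have "J = lmult w (lmult (fg_mult (ginv w) v) (Iv m))"
    using \<open>reduced v\<close> by (simp add: J lmult_lmult fg_mult_ginv_cancel')
  then have "I \<inter> J = lmult w (Iv n \<inter> lmult (fg_mult (ginv w) v) (Iv m))"
    by (simp add: I lmult_Int Iv_subset_reduced lmult_subset_reduced)
  then show ?thesis
    by (simp add: Iv_Int_lmult_interval lmult_interval)
qed (auto simp: intervals_def)

end
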